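(* Let $d_1,d_2,e_1,e_2\ge2$ be integers, $d=d_1+d_2$, and let $A$ be the $d\times d_1e_1d_2e_2$ matrix whose columns are the vectors $i\,\mathbf{e}_\kappa\oplus j\,\mathbf{e}_\lambda\in\mathbb{N}^{d_1}\oplus\mathbb{N}^{d_2}$ for $(\kappa,i,\lambda,j)\in[d_1]\times[e_1]\times[d_2]\times[e_2]$. Then the $d$-dimensional polytope $\mathrm{conv}(A\cup0)$ has $d+4$ facets, given by the $d+2$ inequalities $$y_k\ge0\ (k\in[d]),\quad y_1+\dots+y_{d_1}\le e_1(y_{d_1+1}+\dots+y_{d_1+d_2}),\quad y_{d_1+1}+\dots+y_{d_1+d_2}\le e_2(y_1+\dots+y_{d_1}),$$ together with $y_1+\dots+y_{d_1}\le e_1$ and $y_{d_1+1}+\dots+y_{d_1+d_2}\le e_2$.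
   Context: $[m]=\{1,\dots,m\}$; $\mathbf{e}_\kappa,\mathbf{e}_\lambda$ are standard unit vectors; $\mathrm{conv}(A\cup 0)\subset\mathbb{R}^d$ is the convex hull of the columns of $A$ together with the origin. *)

theory Defs
  imports "HOL-Analysis.Analysis"
begin

text \<open>Coordinates of R^d, d = d1 + d2, are indexed by the sum type 'a + 'b with
  CARD('a) = d1 (first block, Inl) and CARD('b) = d2 (second block, Inr).\<close>

definition blockvec :: "'a \<Rightarrow> nat \<Rightarrow> 'b \<Rightarrow> nat \<Rightarrow> real ^ ('a::finite + 'b::finite)" where
  "blockvec \<kappa> i l j = (\<chi> k. case k of Inl a \<Rightarrow> (if a = \<kappa> then real i else 0)
                                       | Inr b \<Rightarrow> (if b = l then real j else 0))"

definition Acols :: "nat \<Rightarrow> nat \<Rightarrow> (real ^ ('a::finite + 'b::finite)) set" where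
  "Acols e1 e2 = {blockvec \<kappa> i l j | \<kappa> i l j. i \<in> {1..e1} \<and> j \<in> {1..e2}}"

definition PA :: "nat \<Rightarrow> nat \<Rightarrow> (real ^ ('a::finite + 'b::finite)) set" where
  "PA e1 e2 = convex hull (insert 0 (Acols e1 e2))"

definition one1 :: "real ^ ('a::finite + 'b::finite)" where
  "one1 = (\<chi> k. case k of Inl _ \<Rightarrow> 1 | Inr _ \<Rightarrow> 0)"

definition one2 :: "real ^ ('a::finite + 'b::finite)" where
  "one2 = (\<chi> k. case k of Inl _ \<Rightarrow> 0 | Inr _ \<Rightarrow> 1)"

text \<open>The d+4 inequalities, each as a pair (c, r) meaning  c \<bullet> y \<le> r.\<close>
definition ineqs :: "nat \<Rightarrow> nat \<Rightarrow> ((real ^ ('a::finite + 'b::finite)) \<times> real) set" where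
  "ineqs e1 e2 =
     {(- axis k 1, 0) | k. True}
     \<union> {(one1 - real e1 *\<^sub>R one2, 0),
        (one2 - real e2 *\<^sub>R one1, 0),
        (one1, real e1),
        (one2, real e2)}"

end

theory Submission
  imports Defs
begin

(*
  Write s1 y and s2 y for the sums of the two blocks of coordinates. The columns of A and 0
  satisfy the d + 4 inequalities, so PA lies in the polyhedron they define. Conversely, a point y
  of that polyhedron with s1 y, s2 y > 0 is the convex combination, with weights
  (y_k / s1 y) (y_l / s2 y), of the points s1 y e_k + s2 y e_l; each of these lies in the plane
  polygon conv {0, (e1, 1), (e1, e2), (1, e2)} spanned by the coordinates k and l, which is exactly
  what the inequalities cut out there.
  For every inequality there is a point of the polyhedron where it is tight and all the others
  are strict (for y_k >= 0 this needs a second coordinate in the block of k, hence d1, d2 >= 2).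
  Pushing that point across the hyperplane shows that no inequality is redundant, so each one
  defines its own facet.
*)

lemma exists_beyond_hyperplane:
  fixes c :: "'a::euclidean_space"
  assumes "finite J" "c \<noteq> 0" "c \<bullet> z = r" and slack: "\<forall>(c', r')\<in>J. c' \<bullet> z < r'"
  shows "\<exists>w. r < c \<bullet> w \<and> (\<forall>(c', r')\<in>J. c' \<bullet> w < r')"
proof -
  have "open (\<Inter>(c', r')\<in>J. {x. c' \<bullet> x < r'})"
    using \<open>finite J\<close> by (auto intro!: open_INT open_halfspace_lt)
  moreover have "z \<in> (\<Inter>(c', r')\<in>J. {x. c' \<bullet> x < r'})"
    using slack by auto
  ultimately obtain e where "e > 0" and ball: "ball z e \<subseteq> (\<Inter>(c', r')\<in>J. {x. c' \<bullet> x < r'})"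
    by (meson openE)
  define w where "w = z + (e / (2 * norm c)) *\<^sub>R c"
  have "w \<in> ball z e"
    using \<open>e > 0\<close> \<open>c \<noteq> 0\<close> by (simp add: w_def dist_norm)
  moreover have "c \<bullet> w = r + e * norm c / 2"
    using \<open>c \<noteq> 0\<close> \<open>c \<bullet> z = r\<close> by (simp add: w_def inner_add_right power2_norm_eq_inner[symmetric] power2_eq_square)
  ultimately show ?thesis
    using ball \<open>e > 0\<close> \<open>c \<noteq> 0\<close> by (intro exI[of _ w]) force
qed

lemma halfspace_intersection_psubset:
  assumes S_eq: "S = {x. \<forall>(c, r)\<in>I. c \<bullet> x \<le> r}"
    and irredundant: "\<And>c r. (c, r) \<in> I \<Longrightarrow> \<exists>w. r < c \<bullet> w \<and> (\<forall>(c', r')\<in>I - {(c, r)}. c' \<bullet> w \<le> r')"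
    and F': "F' \<subset> (\<lambda>(c, r). {x. c \<bullet> x \<le> r}) ` I"
  shows "S \<subset> \<Inter>F'"
proof -
  obtain c r where cr: "(c, r) \<in> I" "{x. c \<bullet> x \<le> r} \<notin> F'"
    using F' by auto
  obtain w where w: "r < c \<bullet> w" "\<forall>(c', r')\<in>I - {(c, r)}. c' \<bullet> w \<le> r'"
    using irredundant[OF cr(1)] by blast
  have "w \<in> \<Inter>F'"
  proof
    fix h assume "h \<in> F'"
    then obtain q where q: "q \<in> I - {(c, r)}" "h = {x. fst q \<bullet> x \<le> snd q}"
      using F' cr(2) by (force simp: case_prod_beta)
    then show "w \<in> h"
      using bspec[OF w(2) q(1)] by (simp add: case_prod_beta)
  qed
  moreover have "w \<notin> S"
    using w(1) cr(1) S_eq by force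
  moreover have "S \<subseteq> \<Inter>F'"
    using F' S_eq by force
  ultimately show ?thesis
    by blast
qed

lemma facet_of_halfspace_intersection_iff:
  fixes I :: "('a::euclidean_space \<times> real) set"
  assumes "finite I"
    and S_eq: "S = {x. \<forall>(c, r)\<in>I. c \<bullet> x \<le> r}"
    and full: "affine hull S = UNIV"
    and nonzero: "\<And>c r. (c, r) \<in> I \<Longrightarrow> c \<noteq> 0"
    and irredundant: "\<And>c r. (c, r) \<in> I \<Longrightarrow> \<exists>w. r < c \<bullet> w \<and> (\<forall>(c', r')\<in>I - {(c, r)}. c' \<bullet> w \<le> r')"
  shows "F facet_of S \<longleftrightarrow> (\<exists>(c, r)\<in>I. F = S \<inter> {x. c \<bullet> x = r})"
proof -
  define H :: "'a \<times> real \<Rightarrow> 'a set" where "H = (\<lambda>(c, r). {x. c \<bullet> x \<le> r})"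
  \<comment> \<open>\<open>facet_of_polyhedron_explicit\<close> is stated for a set of halfspaces; \<open>a\<close> and \<open>b\<close> pick
    a defining pair of each.\<close>
  define a where "a h = fst (inv_into I H h)" for h
  define b where "b h = snd (inv_into I H h)" for h
  have boundary: "{x. c \<bullet> x = r} = frontier (H (c, r))" if "(c, r) \<in> I" for c r
    using nonzero[OF that] by (simp add: H_def frontier_halfspace_le)
  have ab: "a h \<noteq> 0" "h = {x. a h \<bullet> x \<le> b h}" "{x. a h \<bullet> x = b h} = frontier h"
    if "h \<in> H ` I" for h
  proof -
    obtain c r where p: "inv_into I H h = (c, r)"
      by fastforce
    moreover have "(c, r) \<in> I" "H (c, r) = h"
      using that p[symmetric] by (simp_all add: inv_into_into f_inv_into_f)
    ultimately show "a h \<noteq> 0" "h = {x. a h \<bullet> x \<le> b h}" "{x. a h \<bullet> x = b h} = frontier h"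
      using nonzero boundary by (auto simp: a_def b_def H_def)
  qed
  have psubset: "S \<subset> affine hull S \<inter> \<Inter>F'" if "F' \<subset> H ` I" for F'
    using halfspace_intersection_psubset[OF S_eq irredundant that[unfolded H_def]] full by simp
  have "F facet_of S \<longleftrightarrow> (\<exists>h. h \<in> H ` I \<and> F = S \<inter> {x. a h \<bullet> x = b h})"
  proof (rule facet_of_polyhedron_explicit)
    show "finite (H ` I)"
      using \<open>finite I\<close> by blast
    show "S = affine hull S \<inter> \<Inter>(H ` I)"
      using full by (auto simp: S_eq H_def)
    show "a h \<noteq> 0 \<and> h = {x. a h \<bullet> x \<le> b h}" if "h \<in> H ` I" for h
      using ab(1,2)[OF that] by (rule conjI)
  qed (fact psubset)
  moreover have "{x. a (H p) \<bullet> x = b (H p)} = {x. fst p \<bullet> x = snd p}" if "p \<in> I" for p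
    using ab(3)[of "H p"] boundary[of "fst p" "snd p"] that by auto
  ultimately show ?thesis
    by (auto simp: case_prod_beta)
qed

lemma facets_of_halfspace_intersection:
  fixes I :: "('a::euclidean_space \<times> real) set"
  assumes "finite I"
    and S_eq: "S = {x. \<forall>(c, r)\<in>I. c \<bullet> x \<le> r}"
    and full: "affine hull S = UNIV"
    and nonzero: "\<And>c r. (c, r) \<in> I \<Longrightarrow> c \<noteq> 0"
    and tight: "\<And>c r. (c, r) \<in> I \<Longrightarrow> \<exists>z. c \<bullet> z = r \<and> (\<forall>(c', r')\<in>I - {(c, r)}. c' \<bullet> z < r')"
  shows "{F. F facet_of S} = (\<lambda>(c, r). S \<inter> {x. c \<bullet> x = r}) ` I"
    and "inj_on (\<lambda>(c, r). S \<inter> {x. c \<bullet> x = r}) I"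
proof -
  have "\<exists>w. r < c \<bullet> w \<and> (\<forall>(c', r')\<in>I - {(c, r)}. c' \<bullet> w \<le> r')" if cr: "(c, r) \<in> I" for c r
  proof -
    obtain z where "c \<bullet> z = r" "\<forall>(c', r')\<in>I - {(c, r)}. c' \<bullet> z < r'"
      using tight[OF cr] by blast
    then obtain w where "r < c \<bullet> w" "\<forall>(c', r')\<in>I - {(c, r)}. c' \<bullet> w < r'"
      using exists_beyond_hyperplane[of "I - {(c, r)}" c] \<open>finite I\<close> nonzero[OF cr] by blast
    then show ?thesis
      by (auto intro!: exI[of _ w] less_imp_le)
  qed
  then show "{F. F facet_of S} = (\<lambda>(c, r). S \<inter> {x. c \<bullet> x = r}) ` I"
    using facet_of_halfspace_intersection_iff[OF assms(1-4)] by auto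
  show "inj_on (\<lambda>(c, r). S \<inter> {x. c \<bullet> x = r}) I"
  proof (rule inj_onI, rule ccontr)
    fix p q assume pq: "p \<in> I" "q \<in> I" "p \<noteq> q"
      and eq: "(\<lambda>(c, r). S \<inter> {x. c \<bullet> x = r}) p = (\<lambda>(c, r). S \<inter> {x. c \<bullet> x = r}) q"
    obtain z where z: "fst p \<bullet> z = snd p" "\<forall>(c', r')\<in>I - {p}. c' \<bullet> z < r'"
      using tight[of "fst p" "snd p"] pq(1) by auto
    have "z \<in> S"
      unfolding S_eq
    proof safe
      fix c r assume "(c, r) \<in> I"
      then show "c \<bullet> z \<le> r"
        using z(1) bspec[OF z(2), of "(c, r)"] by (cases "(c, r) = p") auto
    qed
    then have "fst q \<bullet> z = snd q"
      using eq z(1) by (auto simp: case_prod_beta)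
    moreover have "fst q \<bullet> z < snd q"
      using bspec[OF z(2), of q] pq by (simp add: case_prod_beta)
    ultimately show False
      by simp
  qed
qed

lemma convex_halfspace_intersection: "convex {x. \<forall>(c, r)\<in>I. c \<bullet> x \<le> r}"
proof -
  have "{x. \<forall>(c, r)\<in>I. c \<bullet> x \<le> r} = (\<Inter>(c, r)\<in>I. {x. c \<bullet> x \<le> r})"
    by auto
  then show ?thesis
    by (simp add: convex_INT convex_halfspace_le case_prod_beta)
qed

definition block1_sum :: "real ^ ('a::finite + 'b::finite) \<Rightarrow> real" where
  "block1_sum y = (\<Sum>a\<in>UNIV. y $ Inl a)"

definition block2_sum :: "real ^ ('a::finite + 'b::finite) \<Rightarrow> real" where
  "block2_sum y = (\<Sum>b\<in>UNIV. y $ Inr b)"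

definition join_blocks :: "('a \<Rightarrow> real) \<Rightarrow> ('b \<Rightarrow> real) \<Rightarrow> real ^ ('a::finite + 'b::finite)" where
  "join_blocks f g = (\<chi> k. case k of Inl a \<Rightarrow> f a | Inr b \<Rightarrow> g b)"

definition blockvec_real :: "'a \<Rightarrow> real \<Rightarrow> 'b \<Rightarrow> real \<Rightarrow> real ^ ('a::finite + 'b::finite)" where
  "blockvec_real \<kappa> p l q = join_blocks (\<lambda>a. if a = \<kappa> then p else 0) (\<lambda>b. if b = l then q else 0)"

lemma join_blocks_nth [simp]:
  "join_blocks f g $ Inl a = f a" "join_blocks f g $ Inr b = g b"
  by (simp_all add: join_blocks_def)

lemma block_sums_join_blocks [simp]:
  "block1_sum (join_blocks f g) = sum f UNIV" "block2_sum (join_blocks f g) = sum g UNIV"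
  by (simp_all add: block1_sum_def block2_sum_def)

lemma sum_UNIV_Plus:
  "(\<Sum>k\<in>(UNIV :: ('a::finite + 'b::finite) set). h k) = (\<Sum>a\<in>UNIV. h (Inl a)) + (\<Sum>b\<in>UNIV. h (Inr b))"
  by (subst UNIV_Plus_UNIV[symmetric], subst sum.Plus) auto

lemma inner_one1: "one1 \<bullet> y = block1_sum y"
  by (simp add: inner_vec_def one1_def block1_sum_def sum_UNIV_Plus)

lemma inner_one2: "one2 \<bullet> y = block2_sum y"
  by (simp add: inner_vec_def one2_def block2_sum_def sum_UNIV_Plus)

lemma one1_nth [simp]: "one1 $ Inl a = 1" "one1 $ Inr b = 0"
  by (simp_all add: one1_def)

lemma one2_nth [simp]: "one2 $ Inl a = 0" "one2 $ Inr b = 1"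
  by (simp_all add: one2_def)

lemma blockvec_eq_blockvec_real: "blockvec \<kappa> i l j = blockvec_real \<kappa> (real i) l (real j)"
  by (simp add: blockvec_def blockvec_real_def join_blocks_def)

lemma scaleR_add_blockvec_real:
  "\<alpha> *\<^sub>R blockvec_real \<kappa> p l q + \<beta> *\<^sub>R blockvec_real \<kappa> p' l q'
     = blockvec_real \<kappa> (\<alpha> * p + \<beta> * p') l (\<alpha> * q + \<beta> * q')"
  by (simp add: blockvec_real_def join_blocks_def vec_eq_iff split: sum.split)

lemma satisfies_ineqs_iff:
  "(\<forall>(c, r)\<in>ineqs e1 e2. c \<bullet> y \<le> r) \<longleftrightarrow>
     (\<forall>k. 0 \<le> y $ k) \<and> block1_sum y \<le> real e1 * block2_sum y \<and> block2_sum y \<le> real e2 * block1_sum y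
     \<and> block1_sum y \<le> real e1 \<and> block2_sum y \<le> real e2"
  by (auto simp: ineqs_def inner_axis' inner_one1 inner_one2 inner_diff_left)

lemma scaleR_add_in_convex_hull_0:
  fixes x y :: "'v::real_vector"
  assumes "0 \<le> \<alpha>" "0 \<le> \<beta>" "\<alpha> + \<beta> \<le> 1"
  shows "\<alpha> *\<^sub>R x + \<beta> *\<^sub>R y \<in> convex hull {0, x, y}"
  unfolding convex_hull_3 using assms
  by (intro CollectI exI[of _ "1 - \<alpha> - \<beta>"] exI[of _ \<alpha>] exI[of _ \<beta>]) auto

lemma convex_PA: "convex (PA e1 e2)"
  by (simp add: PA_def)

lemma zero_in_PA: "0 \<in> PA e1 e2"
  by (simp add: PA_def hull_inc)

lemma blockvec_in_PA: "i \<in> {1..e1} \<Longrightarrow> j \<in> {1..e2} \<Longrightarrow> blockvec \<kappa> i l j \<in> PA e1 e2"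
  unfolding PA_def Acols_def by (rule hull_inc) blast

lemma convex_hull_0_subset_PA:
  "x \<in> PA e1 e2 \<Longrightarrow> y \<in> PA e1 e2 \<Longrightarrow> convex hull {0, x, y} \<subseteq> PA e1 e2"
  by (simp add: hull_minimal convex_PA zero_in_PA)

lemma blockvec_real_in_PA_triangle:
  assumes "blockvec_real \<kappa> p1 l q1 \<in> PA e1 e2" "blockvec_real \<kappa> p2 l q2 \<in> PA e1 e2"
    and "0 \<le> \<alpha>" "0 \<le> \<beta>" "\<alpha> + \<beta> \<le> 1"
  shows "blockvec_real \<kappa> (\<alpha> * p1 + \<beta> * p2) l (\<alpha> * q1 + \<beta> * q2) \<in> PA e1 e2"
  using scaleR_add_in_convex_hull_0[OF assms(3-5)] convex_hull_0_subset_PA[OF assms(1,2)]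
  by (auto simp: scaleR_add_blockvec_real[symmetric])

lemma blockvec_real_in_PA_below_diagonal:
  assumes "1 \<le> e1" "2 \<le> e2"
    and "p \<le> real e1 * q" "q * real e1 \<le> p * real e2" "p \<le> real e1"
  shows "blockvec_real \<kappa> p l q \<in> PA e1 e2"
proof -
  have e: "0 < real e1" "0 < real e2 - 1"
    using assms(1,2) by auto
  define \<beta> where "\<beta> = (q - p / e1) / (e2 - 1)"
  define \<alpha> where "\<alpha> = p / e1 - \<beta>"
  have "0 \<le> \<alpha>"
    using assms(4) e by (simp add: \<alpha>_def \<beta>_def field_simps)
  moreover have "0 \<le> \<beta>"
    using assms(3) e by (simp add: \<beta>_def field_simps)
  moreover have "\<alpha> + \<beta> \<le> 1"
    using assms(5) e by (simp add: \<alpha>_def)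
  moreover have "blockvec_real \<kappa> (real e1) l 1 \<in> PA e1 e2" "blockvec_real \<kappa> (real e1) l (real e2) \<in> PA e1 e2"
    using blockvec_in_PA[of e1 e1 1 e2 \<kappa> l] blockvec_in_PA[of e1 e1 e2 e2 \<kappa> l] assms(1,2)
    by (simp_all add: blockvec_eq_blockvec_real)
  ultimately have "blockvec_real \<kappa> (\<alpha> * real e1 + \<beta> * real e1) l (\<alpha> * 1 + \<beta> * real e2) \<in> PA e1 e2"
    by (intro blockvec_real_in_PA_triangle)
  moreover have "\<alpha> * real e1 + \<beta> * real e1 = p"
    using e by (simp add: \<alpha>_def field_simps)
  moreover have "\<beta> * (real e2 - 1) = q - p / e1"
    using e by (simp add: \<beta>_def)
  then have "\<alpha> * 1 + \<beta> * real e2 = q"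
    unfolding \<alpha>_def right_diff_distrib mult_1_right by linarith
  ultimately show ?thesis
    by simp
qed

lemma blockvec_real_in_PA_above_diagonal:
  assumes "2 \<le> e1" "1 \<le> e2"
    and "q \<le> real e2 * p" "p * real e2 \<le> q * real e1" "q \<le> real e2"
  shows "blockvec_real \<kappa> p l q \<in> PA e1 e2"
proof -
  have e: "0 < real e1 - 1" "0 < real e2"
    using assms(1,2) by auto
  define \<beta> where "\<beta> = (p - q / e2) / (e1 - 1)"
  define \<alpha> where "\<alpha> = q / e2 - \<beta>"
  have "0 \<le> \<alpha>"
    using assms(4) e by (simp add: \<alpha>_def \<beta>_def field_simps)
  moreover have "0 \<le> \<beta>"
    using assms(3) e by (simp add: \<beta>_def field_simps)
  moreover have "\<alpha> + \<beta> \<le> 1"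
    using assms(5) e by (simp add: \<alpha>_def)
  moreover have "blockvec_real \<kappa> 1 l (real e2) \<in> PA e1 e2" "blockvec_real \<kappa> (real e1) l (real e2) \<in> PA e1 e2"
    using blockvec_in_PA[of 1 e1 e2 e2 \<kappa> l] blockvec_in_PA[of e1 e1 e2 e2 \<kappa> l] assms(1,2)
    by (simp_all add: blockvec_eq_blockvec_real)
  ultimately have "blockvec_real \<kappa> (\<alpha> * 1 + \<beta> * real e1) l (\<alpha> * real e2 + \<beta> * real e2) \<in> PA e1 e2"
    by (intro blockvec_real_in_PA_triangle)
  moreover have "\<alpha> * real e2 + \<beta> * real e2 = q"
    using e by (simp add: \<alpha>_def field_simps)
  moreover have "\<beta> * (real e1 - 1) = p - q / e2"
    using e by (simp add: \<beta>_def)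
  then have "\<alpha> * 1 + \<beta> * real e1 = p"
    unfolding \<alpha>_def right_diff_distrib mult_1_right by linarith
  ultimately show ?thesis
    by simp
qed

text \<open>The polygon is the union of the triangles with vertices 0, (e1, 1), (e1, e2) and
  0, (1, e2), (e1, e2).\<close>

lemma blockvec_real_in_PA:
  assumes "2 \<le> e1" "2 \<le> e2"
    and "p \<le> real e1 * q" "q \<le> real e2 * p" "p \<le> real e1" "q \<le> real e2"
  shows "blockvec_real \<kappa> p l q \<in> PA e1 e2"
proof (cases "q * real e1 \<le> p * real e2")
  case True
  then show ?thesis
    using assms by (intro blockvec_real_in_PA_below_diagonal) auto
next
  case False
  then show ?thesis
    using assms by (intro blockvec_real_in_PA_above_diagonal) auto
qed

lemma sum_blockvec_real_nth:
  "(\<Sum>a\<in>UNIV. w a *\<^sub>R (\<Sum>b\<in>UNIV. v b *\<^sub>R blockvec_real a p b q)) $ Inl \<kappa> = w \<kappa> * sum v UNIV * p"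
  "(\<Sum>a\<in>UNIV. w a *\<^sub>R (\<Sum>b\<in>UNIV. v b *\<^sub>R blockvec_real a p b q)) $ Inr l = sum w UNIV * v l * q"
proof -
  have "(\<Sum>a\<in>UNIV. w a *\<^sub>R (\<Sum>b\<in>UNIV. v b *\<^sub>R blockvec_real a p b q)) $ Inl \<kappa>
      = (\<Sum>a\<in>UNIV. w a * (sum v UNIV * (if \<kappa> = a then p else 0)))"
    by (simp add: blockvec_real_def sum_distrib_right)
  also have "\<dots> = w \<kappa> * sum v UNIV * p"
    by (simp add: if_distrib cong: if_cong)
  finally show "(\<Sum>a\<in>UNIV. w a *\<^sub>R (\<Sum>b\<in>UNIV. v b *\<^sub>R blockvec_real a p b q)) $ Inl \<kappa>
      = w \<kappa> * sum v UNIV * p" .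
  show "(\<Sum>a\<in>UNIV. w a *\<^sub>R (\<Sum>b\<in>UNIV. v b *\<^sub>R blockvec_real a p b q)) $ Inr l = sum w UNIV * v l * q"
    by (simp add: blockvec_real_def sum_distrib_left sum_distrib_right mult.assoc if_distrib cong: if_cong)
qed

lemma sum_block_weights:
  "block1_sum y \<noteq> 0 \<Longrightarrow> (\<Sum>a\<in>UNIV. y $ Inl a / block1_sum y) = 1"
  "block2_sum y \<noteq> 0 \<Longrightarrow> (\<Sum>b\<in>UNIV. y $ Inr b / block2_sum y) = 1"
  by (simp_all add: sum_divide_distrib[symmetric] block1_sum_def block2_sum_def)

lemma convex_combination_blockvec_real:
  fixes y :: "real ^ ('a::finite + 'b::finite)"
  assumes "block1_sum y \<noteq> 0" "block2_sum y \<noteq> 0"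
  shows "y = (\<Sum>a\<in>UNIV. (y $ Inl a / block1_sum y) *\<^sub>R
               (\<Sum>b\<in>UNIV. (y $ Inr b / block2_sum y) *\<^sub>R blockvec_real a (block1_sum y) b (block2_sum y)))"
    (is "y = ?z")
proof -
  have "?z $ k = y $ k" for k
  proof (cases k)
    case (Inl a)
    show ?thesis
      unfolding Inl sum_blockvec_real_nth sum_block_weights(2)[OF assms(2)] using assms(1) by simp
  next
    case (Inr b)
    show ?thesis
      unfolding Inr sum_blockvec_real_nth sum_block_weights(1)[OF assms(1)] using assms(2) by simp
  qed
  then show ?thesis
    by (simp add: vec_eq_iff)
qed

lemma block_sums_blockvec [simp]:
  "block1_sum (blockvec \<kappa> i l j) = real i" "block2_sum (blockvec \<kappa> i l j) = real j"
  by (simp_all add: blockvec_eq_blockvec_real blockvec_real_def)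

lemma blockvec_nonneg: "0 \<le> blockvec \<kappa> i l j $ k"
  by (simp add: blockvec_def split: sum.split)

lemma Acols_satisfy_ineqs:
  assumes "y \<in> insert 0 (Acols e1 e2)"
  shows "\<forall>(c, r)\<in>ineqs e1 e2. c \<bullet> y \<le> r"
  using assms
proof
  assume "y = 0"
  then show ?thesis
    unfolding satisfies_ineqs_iff by (simp add: block1_sum_def block2_sum_def)
next
  assume "y \<in> Acols e1 e2"
  then obtain \<kappa> i l j where y: "y = blockvec \<kappa> i l j" and ij: "1 \<le> i" "i \<le> e1" "1 \<le> j" "j \<le> e2"
    by (auto simp: Acols_def)
  have "real i \<le> real e1 * real j"
    using ij(2,3) mult_left_mono[of 1 "real j" "real e1"] by simp
  moreover have "real j \<le> real e2 * real i"
    using ij(1,4) mult_left_mono[of 1 "real i" "real e2"] by simp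
  ultimately show ?thesis
    using ij by (simp add: satisfies_ineqs_iff y blockvec_nonneg)
qed

lemma nonneg_eq_0_if_block_sums_eq_0:
  assumes "\<forall>k. 0 \<le> y $ k" "block1_sum y = 0" "block2_sum y = 0"
  shows "y = 0"
proof -
  have "y $ Inl a = 0" "y $ Inr b = 0" for a b
    using assms by (simp_all add: block1_sum_def block2_sum_def sum_nonneg_eq_0_iff)
  then show ?thesis
    by (metis sum.exhaust vec_eq_iff zero_index)
qed

lemma in_PA_if_satisfies_ineqs:
  assumes "2 \<le> e1" "2 \<le> e2" and "\<forall>(c, r)\<in>ineqs e1 e2. c \<bullet> y \<le> r"
  shows "y \<in> PA e1 e2"
proof -
  have nonneg: "\<forall>k. 0 \<le> y $ k"
    and ineqs: "block1_sum y \<le> real e1 * block2_sum y" "block2_sum y \<le> real e2 * block1_sum y"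
      "block1_sum y \<le> real e1" "block2_sum y \<le> real e2"
    using assms(3) by (simp_all add: satisfies_ineqs_iff)
  have sums_nonneg: "0 \<le> block1_sum y" "0 \<le> block2_sum y"
    using nonneg by (simp_all add: block1_sum_def block2_sum_def sum_nonneg)
  show ?thesis
  proof (cases "block1_sum y = 0")
    case True
    then have "y = 0"
      using nonneg ineqs(2) sums_nonneg by (intro nonneg_eq_0_if_block_sums_eq_0) simp_all
    then show ?thesis
      by (simp add: zero_in_PA)
  next
    case False
    then have "0 < real e1 * block2_sum y"
      using ineqs(1) sums_nonneg(1) by linarith
    then have pos: "block1_sum y \<noteq> 0" "block2_sum y \<noteq> 0"
      using False by auto
    have "(\<Sum>a\<in>UNIV. (y $ Inl a / block1_sum y) *\<^sub>R
        (\<Sum>b\<in>UNIV. (y $ Inr b / block2_sum y) *\<^sub>R blockvec_real a (block1_sum y) b (block2_sum y)))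
        \<in> PA e1 e2"
      using sum_block_weights(1)[OF pos(1)] sum_block_weights(2)[OF pos(2)] nonneg sums_nonneg ineqs assms(1,2)
      by (intro convex_sum convex_PA blockvec_real_in_PA finite) simp_all
    then show ?thesis
      using convex_combination_blockvec_real[OF pos] by simp
  qed
qed

lemma PA_eq_halfspace_intersection:
  assumes "2 \<le> e1" "2 \<le> e2"
  shows "PA e1 e2 = {y. \<forall>(c, r)\<in>ineqs e1 e2. c \<bullet> y \<le> r}"
proof
  show "PA e1 e2 \<subseteq> {y. \<forall>(c, r)\<in>ineqs e1 e2. c \<bullet> y \<le> r}"
    unfolding PA_def using Acols_satisfy_ineqs
    by (intro hull_minimal convex_halfspace_intersection) blast
  show "{y. \<forall>(c, r)\<in>ineqs e1 e2. c \<bullet> y \<le> r} \<subseteq> PA e1 e2"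
    using in_PA_if_satisfies_ineqs[OF assms] by blast
qed

lemma blockvec_differences:
  "blockvec \<kappa> 2 l 1 - blockvec \<kappa> 1 l 1 = axis (Inl \<kappa>) 1"
  "blockvec \<kappa> 1 l 2 - blockvec \<kappa> 1 l 1 = axis (Inr l) 1"
  by (auto simp: blockvec_def axis_def vec_eq_iff split: sum.split)

lemma affine_hull_PA:
  assumes "2 \<le> e1" "2 \<le> e2"
  shows "affine hull (PA e1 e2 :: (real ^ ('a::finite + 'b::finite)) set) = UNIV"
proof -
  have blockvecs: "blockvec \<kappa> i l j \<in> span (PA e1 e2)" if "i \<in> {1, 2}" "j \<in> {1, 2}" for \<kappa> i l j
    using that assms by (intro span_base blockvec_in_PA) auto
  have "axis k 1 \<in> span (PA e1 e2 :: (real ^ ('a + 'b)) set)" for k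
  proof (cases k)
    case (Inl \<kappa>)
    fix l :: 'b
    show ?thesis
      using blockvec_differences(1)[of \<kappa> l] blockvecs Inl by (metis insertI1 insertI2 span_diff)
  next
    case (Inr l)
    fix \<kappa> :: 'a
    show ?thesis
      using blockvec_differences(2)[of \<kappa> l] blockvecs Inr by (metis insertI1 insertI2 span_diff)
  qed
  then have "Basis \<subseteq> span (PA e1 e2 :: (real ^ ('a + 'b)) set)"
    by (auto simp: Basis_vec_def)
  then have "span (PA e1 e2 :: (real ^ ('a + 'b)) set) = UNIV"
    by (metis span_Basis span_mono span_span top.extremum_uniqueI)
  moreover have "affine hull (PA e1 e2 :: (real ^ ('a + 'b)) set) = span (PA e1 e2)"
    by (simp add: affine_hull_span_0 hull_inc zero_in_PA)
  ultimately show ?thesis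
    by simp
qed

lemma ineqs_eq:
  "ineqs e1 e2 = range (\<lambda>k. (- axis k 1, 0)) \<union>
     {(one1 - real e1 *\<^sub>R one2, 0), (one2 - real e2 *\<^sub>R one1, 0), (one1, real e1), (one2, real e2)}"
  by (auto simp: ineqs_def)

lemma card_ineqs:
  assumes "0 < e1" "0 < e2"
  shows "card (ineqs e1 e2 :: ((real ^ ('a::finite + 'b::finite)) \<times> real) set) = CARD('a) + CARD('b) + 4"
proof -
  fix a :: 'a and b :: 'b
  let ?X = "\<lambda>k. (- axis k 1, 0) :: (real ^ ('a + 'b)) \<times> real"
  let ?F = "{(one1 - real e1 *\<^sub>R one2, 0), (one2 - real e2 *\<^sub>R one1, 0), (one1, real e1), (one2, real e2)}
    :: ((real ^ ('a + 'b)) \<times> real) set"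
  have "card (range ?X) = CARD('a + 'b)"
    by (simp add: card_image inj_on_def axis_eq_axis)
  moreover have "card ?F = 4"
  proof -
    have neq: "u \<noteq> v" if "u $ Inl a \<noteq> v $ Inl a" for u v :: "real ^ ('a + 'b)"
      using that by auto
    have "one1 - real e1 *\<^sub>R one2 \<noteq> (one2 - real e2 *\<^sub>R one1 :: real ^ ('a + 'b))"
      "one1 \<noteq> (one2 :: real ^ ('a + 'b))"
      by (rule neq, simp)+
    then show ?thesis
      using assms by (simp add: card_insert_if)
  qed
  moreover have "range ?X \<inter> ?F = {}"
  proof -
    have "0 < fst p $ Inl a \<or> 0 < fst p $ Inr b \<or> 0 < snd p" if "p \<in> ?F" for p
      using that assms by auto
    moreover have "\<not> (0 < fst p $ Inl a \<or> 0 < fst p $ Inr b \<or> 0 < snd p)" if "p \<in> range ?X" for p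
      using that by (auto simp: axis_def split: if_splits)
    ultimately show ?thesis
      by blast
  qed
  ultimately show ?thesis
    unfolding ineqs_eq by (subst card_Un_disjoint) auto
qed

lemma ineqs_cases [consumes 1, case_names nonneg_Inl nonneg_Inr ratio1 ratio2 bound1 bound2]:
  assumes "p \<in> ineqs e1 e2"
  obtains (nonneg_Inl) a where "p = (- axis (Inl a) 1, 0)"
    | (nonneg_Inr) b where "p = (- axis (Inr b) 1, 0)"
    | (ratio1) "p = (one1 - real e1 *\<^sub>R one2, 0)"
    | (ratio2) "p = (one2 - real e2 *\<^sub>R one1, 0)"
    | (bound1) "p = (one1, real e1)"
    | (bound2) "p = (one2, real e2)"
  using assms unfolding ineqs_eq
proof (elim UnE imageE insertE)
  fix k assume "p = (- axis k 1, 0)"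
  then show thesis
    using nonneg_Inl nonneg_Inr by (cases k) auto
qed (auto intro: ratio1 ratio2 bound1 bound2)

lemma ineqs_nonzero:
  assumes "(c, r) \<in> ineqs e1 e2"
  shows "c \<noteq> 0"
proof -
  fix a :: 'a and b :: 'b
  have "(\<exists>k. c = - axis k 1) \<or> c $ Inl a = 1 \<or> c $ Inr b = 1"
    using assms by (cases rule: ineqs_cases) auto
  then show ?thesis
    by auto
qed

lemma strictly_satisfies_ineqs_except:
  assumes "\<forall>k. (- axis k 1, 0) \<noteq> p \<longrightarrow> 0 < z $ k"
    and "(one1 - real e1 *\<^sub>R one2, 0) \<noteq> p \<longrightarrow> block1_sum z < real e1 * block2_sum z"
    and "(one2 - real e2 *\<^sub>R one1, 0) \<noteq> p \<longrightarrow> block2_sum z < real e2 * block1_sum z"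
    and "(one1, real e1) \<noteq> p \<longrightarrow> block1_sum z < real e1"
    and "(one2, real e2) \<noteq> p \<longrightarrow> block2_sum z < real e2"
  shows "\<forall>(c, r)\<in>ineqs e1 e2 - {p}. c \<bullet> z < r"
proof
  fix q assume "q \<in> ineqs e1 e2 - {p}"
  then have "q \<in> ineqs e1 e2" "q \<noteq> p"
    by simp_all
  then show "case q of (c, r) \<Rightarrow> c \<bullet> z < r"
    by (cases rule: ineqs_cases) (use assms in \<open>auto simp: inner_axis' inner_one1 inner_one2 inner_diff_left\<close>)
qed

definition block_uniform :: "real \<Rightarrow> real \<Rightarrow> real ^ ('a::finite + 'b::finite)" where
  "block_uniform s t = join_blocks (\<lambda>_. s / CARD('a)) (\<lambda>_. t / CARD('b))"

lemma block_sums_block_uniform [simp]: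
  "block1_sum (block_uniform s t :: real ^ ('a::finite + 'b::finite)) = s"
  "block2_sum (block_uniform s t :: real ^ ('a::finite + 'b::finite)) = t"
  by (simp_all add: block_uniform_def)

lemma block_uniform_pos: "0 < s \<Longrightarrow> 0 < t \<Longrightarrow> 0 < block_uniform s t $ k"
  by (simp add: block_uniform_def join_blocks_def split: sum.split)

lemma sum_UNIV_if_eq:
  "(\<Sum>a\<in>(UNIV :: 'a::finite set). if a = a0 then x else t) = x + (real CARD('a) - 1) * t"
proof -
  have "(\<Sum>a\<in>(UNIV :: 'a set). if a = a0 then x else t) = x + (\<Sum>a\<in>UNIV - {a0}. t)"
    by (subst sum.remove[of _ a0]) auto
  also have "\<dots> = x + (real CARD('a) - 1) * t"
    by (simp add: card_Diff_singleton of_nat_diff)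
  finally show ?thesis .
qed

lemma tight_point_nonneg_Inl:
  assumes "2 \<le> CARD('a::finite)" "2 \<le> e1" "2 \<le> e2"
  shows "\<exists>z :: real ^ ('a + 'b::finite). - axis (Inl a0) 1 \<bullet> z = 0 \<and>
    (\<forall>(c', r')\<in>ineqs e1 e2 - {(- axis (Inl a0) 1, 0)}. c' \<bullet> z < r')"
proof -
  define z :: "real ^ ('a + 'b)"
    where "z = join_blocks (\<lambda>a. if a = a0 then 0 else 1 / (CARD('a) - 1)) (\<lambda>b. 1 / CARD('b))"
  have "block1_sum z = 1" "block2_sum z = 1"
    using assms(1) by (simp_all add: z_def sum_UNIV_if_eq)
  moreover have "0 < z $ k" if "k \<noteq> Inl a0" for k
    using that assms(1) by (auto simp: z_def join_blocks_def split: sum.split)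
  ultimately show ?thesis
    using assms(2,3)
    by (intro exI[of _ z] conjI strictly_satisfies_ineqs_except) (auto simp: inner_axis' z_def axis_eq_axis)
qed

lemma tight_point_nonneg_Inr:
  assumes "2 \<le> CARD('b::finite)" "2 \<le> e1" "2 \<le> e2"
  shows "\<exists>z :: real ^ ('a::finite + 'b). - axis (Inr b0) 1 \<bullet> z = 0 \<and>
    (\<forall>(c', r')\<in>ineqs e1 e2 - {(- axis (Inr b0) 1, 0)}. c' \<bullet> z < r')"
proof -
  define z :: "real ^ ('a + 'b)"
    where "z = join_blocks (\<lambda>a. 1 / CARD('a)) (\<lambda>b. if b = b0 then 0 else 1 / (CARD('b) - 1))"
  have "block1_sum z = 1" "block2_sum z = 1"
    using assms(1) by (simp_all add: z_def sum_UNIV_if_eq)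
  moreover have "0 < z $ k" if "k \<noteq> Inr b0" for k
    using that assms(1) by (auto simp: z_def join_blocks_def split: sum.split)
  ultimately show ?thesis
    using assms(2,3)
    by (intro exI[of _ z] conjI strictly_satisfies_ineqs_except) (auto simp: inner_axis' z_def axis_eq_axis)
qed

lemma tight_point_block_uniform:
  assumes "c \<bullet> block_uniform s t = r" "0 < s" "0 < t"
    and "(one1 - real e1 *\<^sub>R one2, 0) \<noteq> (c, r) \<longrightarrow> s < real e1 * t"
    and "(one2 - real e2 *\<^sub>R one1, 0) \<noteq> (c, r) \<longrightarrow> t < real e2 * s"
    and "(one1, real e1) \<noteq> (c, r) \<longrightarrow> s < real e1"
    and "(one2, real e2) \<noteq> (c, r) \<longrightarrow> t < real e2"
  shows "\<exists>z. c \<bullet> z = r \<and> (\<forall>(c', r')\<in>ineqs e1 e2 - {(c, r)}. c' \<bullet> z < r')"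
  using assms
  by (intro exI[of _ "block_uniform s t"] conjI strictly_satisfies_ineqs_except) (auto intro: block_uniform_pos)

lemma ineqs_tight_point:
  assumes "2 \<le> CARD('a)" "2 \<le> CARD('b)" "2 \<le> e1" "2 \<le> e2"
    and "(c, r) \<in> (ineqs e1 e2 :: ((real ^ ('a::finite + 'b::finite)) \<times> real) set)"
  shows "\<exists>z. c \<bullet> z = r \<and> (\<forall>(c', r')\<in>ineqs e1 e2 - {(c, r)}. c' \<bullet> z < r')"
proof -
  have e: "2 \<le> real e1" "2 \<le> real e2"
    using assms(3,4) by simp_all
  then have ee: "4 \<le> real e1 * real e2" "4 \<le> real e2 * real e1"
    using mult_mono[OF e] by (simp_all add: mult.commute)
  from assms(5) show ?thesis
  proof (cases rule: ineqs_cases)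
    case (nonneg_Inl a0)
    then show ?thesis
      using tight_point_nonneg_Inl[OF assms(1,3,4)] by simp
  next
    case (nonneg_Inr b0)
    then show ?thesis
      using tight_point_nonneg_Inr[OF assms(2,3,4)] by simp
  next
    case ratio1
    show ?thesis
      by (rule tight_point_block_uniform[of _ "real e1 / 2" "1 / 2"])
        (use ratio1 e ee in \<open>auto simp: inner_diff_left inner_one1 inner_one2\<close>)
  next
    case ratio2
    show ?thesis
      by (rule tight_point_block_uniform[of _ "1 / 2" "real e2 / 2"])
        (use ratio2 e ee in \<open>auto simp: inner_diff_left inner_one1 inner_one2\<close>)
  next
    case bound1
    show ?thesis
      by (rule tight_point_block_uniform[of _ "real e1" "3 / 2"]) (use bound1 e ee in \<open>auto simp: inner_one1\<close>)
  next
    case bound2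
    show ?thesis
      by (rule tight_point_block_uniform[of _ "3 / 2" "real e2"]) (use bound2 e ee in \<open>auto simp: inner_one2\<close>)
  qed
qed

theorem proposition4p2:
  fixes e1 e2 :: nat
  assumes "CARD('a::finite) \<ge> 2" and "CARD('b::finite) \<ge> 2"
    and "e1 \<ge> 2" and "e2 \<ge> 2"
  shows "aff_dim (PA e1 e2 :: (real ^ ('a + 'b)) set) = int (CARD('a) + CARD('b))
     \<and> card (ineqs e1 e2 :: ((real ^ ('a + 'b)) \<times> real) set) = CARD('a) + CARD('b) + 4
     \<and> (PA e1 e2 :: (real ^ ('a + 'b)) set) = {y. \<forall>(c, r) \<in> ineqs e1 e2. c \<bullet> y \<le> r}
     \<and> {F. F facet_of (PA e1 e2 :: (real ^ ('a + 'b)) set)}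
         = (\<lambda>(c, r). PA e1 e2 \<inter> {y. c \<bullet> y = r}) ` ineqs e1 e2
     \<and> card {F. F facet_of (PA e1 e2 :: (real ^ ('a + 'b)) set)} = CARD('a) + CARD('b) + 4"
proof -
  have full: "affine hull (PA e1 e2 :: (real ^ ('a + 'b)) set) = UNIV"
    using affine_hull_PA assms(3,4) by blast
  have card: "card (ineqs e1 e2 :: ((real ^ ('a + 'b)) \<times> real) set) = CARD('a) + CARD('b) + 4"
    using assms(3,4) by (intro card_ineqs) simp_all
  have PA_eq: "(PA e1 e2 :: (real ^ ('a + 'b)) set) = {y. \<forall>(c, r) \<in> ineqs e1 e2. c \<bullet> y \<le> r}"
    using PA_eq_halfspace_intersection assms(3,4) by blast
  have "finite (ineqs e1 e2 :: ((real ^ ('a + 'b)) \<times> real) set)"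
    by (simp add: ineqs_eq)
  note facets = facets_of_halfspace_intersection[OF this PA_eq full ineqs_nonzero ineqs_tight_point[OF assms]]
  have "aff_dim (PA e1 e2 :: (real ^ ('a + 'b)) set) = int (CARD('a) + CARD('b))"
    using aff_dim_affine_hull[of "PA e1 e2 :: (real ^ ('a + 'b)) set"] by (simp add: full)
  then show ?thesis
    using card PA_eq facets card_image[OF facets(2)] by simp
qed

end
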